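(* Fix $\eta>0$ small, $\mathcal{I}=[\pi/4-\eta,\pi/4+\eta]$ and $\epsilon_0>0$ small. There exists $T>0$ such that $K^\parallel_{r,\epsilon}(\rho_\mu(t))<0$ and $K_\mu(t)<0$ for all $(t,s,r,\epsilon)\in[T,\infty)\times[0,\infty)\times\mathcal{I}\times[0,\epsilon_0]$, where $\mu=(s,r,\epsilon)$.
   Context: Fix $\varphi\in C^\infty(\mathbb{R})$ with $0\le\varphi\le1$, $\varphi(x)=0$ for $x\le0$, $\varphi(x)=1$ for $x\ge1$, and let $H$ be the Heaviside function ($H(x)=1$ for $x>0$, $H(x)=0$ for $x\le0$). For $r>0$, $\epsilon\ge0$ with $r+\epsilon<\pi/2$ and $\rho\ge0$ set $K^\parallel_{r,\epsilon}(\rho)=1-2\varphi((\rho-r)/\epsilon)$ if $\epsilon>0$ and $K^\parallel_{r,0}(\rho)=1-2H(\rho-r)$. Let $\mathcal{A}_{r,\epsilon}$ solve $\mathcal{A}''+K^\parallel_{r,\epsilon}\mathcal{A}=0$, $\mathcal{A}(0)=0$, $\mathcal{A}'(0)=1$ (for $\epsilon=0$: the unique $C^1$ function with these initial values solving the equation on $\rho\ne r$). For $\mu=(s,r,\epsilon)$, $\rho_\mu(t)$ is, for $s>0$, the solution of $\rho''=\frac{\mathcal{A}_{r,\epsilon}'(\rho)}{\mathcal{A}_{r,\epsilon}(\rho)}(1-(\rho')^2)$, $\rho(0)=s$, $\rho'(0)=0$, and $\rho_{0,r,\epsilon}(t)=t$. $K^\perp_{r,\epsilon}=\mathcal{A}_{r,\epsilon}^{-2}(1-(\mathcal{A}_{r,\epsilon}')^2)$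 and $K_\mu(t)=\rho_\mu'(t)^2K^\parallel_{r,\epsilon}(\rho_\mu(t))+(1-\rho_\mu'(t)^2)K^\perp_{r,\epsilon}(\rho_\mu(t))$. *)

theory Defs
  imports "HOL-Analysis.Analysis"
begin

definition smooth_fun :: "(real \<Rightarrow> real) \<Rightarrow> bool" where
  "smooth_fun f \<longleftrightarrow> (\<forall>n x. ((deriv ^^ n) f) differentiable (at x))"

definition cutoff :: "(real \<Rightarrow> real) \<Rightarrow> bool" where
  "cutoff \<phi> \<longleftrightarrow> smooth_fun \<phi> \<and> (\<forall>x. 0 \<le> \<phi> x \<and> \<phi> x \<le> 1)
     \<and> (\<forall>x\<le>0. \<phi> x = 0) \<and> (\<forall>x\<ge>1. \<phi> x = 1)"

definition heaviside :: "real \<Rightarrow> real" where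
  "heaviside x = (if x > 0 then 1 else 0)"

definition Kpar :: "(real \<Rightarrow> real) \<Rightarrow> real \<Rightarrow> real \<Rightarrow> real \<Rightarrow> real" where
  "Kpar \<phi> r \<epsilon> \<rho> =
     (if \<epsilon> > 0 then 1 - 2 * \<phi> ((\<rho> - r) / \<epsilon>) else 1 - 2 * heaviside (\<rho> - r))"

text \<open>Characterisation of the warping function: C^1 solution of A'' + K A = 0 with A(0)=0, A'(0)=1;
  the second-order equation is required everywhere if eps > 0 and away from rho = r if eps = 0.
  (The defining formula for K is extended to all real rho.)\<close>
definition is_warp :: "(real \<Rightarrow> real) \<Rightarrow> real \<Rightarrow> real \<Rightarrow> (real \<Rightarrow> real) \<Rightarrow> bool" where
  "is_warp \<phi> r \<epsilon> A \<longleftrightarrow> (\<exists>A'. A 0 = 0 \<and> A' 0 = 1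
      \<and> (\<forall>x. (A has_real_derivative A' x) (at x))
      \<and> continuous_on UNIV A'
      \<and> (\<forall>x. (\<epsilon> = 0 \<longrightarrow> x \<noteq> r) \<longrightarrow>
             (A' has_real_derivative (- Kpar \<phi> r \<epsilon> x * A x)) (at x)))"

definition warpA :: "(real \<Rightarrow> real) \<Rightarrow> real \<Rightarrow> real \<Rightarrow> real \<Rightarrow> real" where
  "warpA \<phi> r \<epsilon> = (THE A. is_warp \<phi> r \<epsilon> A)"

definition warpA' :: "(real \<Rightarrow> real) \<Rightarrow> real \<Rightarrow> real \<Rightarrow> real \<Rightarrow> real" where
  "warpA' \<phi> r \<epsilon> = deriv (warpA \<phi> r \<epsilon>)"

text \<open>Geodesic radial profile for s > 0: solution (on all of R) of
  rho'' = (A'(rho)/A(rho)) (1 - rho'^2), rho(0)=s, rho'(0)=0.\<close>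
definition is_rho :: "(real \<Rightarrow> real) \<Rightarrow> real \<Rightarrow> real \<Rightarrow> real \<Rightarrow> (real \<Rightarrow> real) \<Rightarrow> bool" where
  "is_rho \<phi> s r \<epsilon> \<rho> \<longleftrightarrow> (\<exists>\<rho>'. \<rho> 0 = s \<and> \<rho>' 0 = 0
      \<and> (\<forall>t. (\<rho> has_real_derivative \<rho>' t) (at t))
      \<and> (\<forall>t. (\<rho>' has_real_derivative
              (warpA' \<phi> r \<epsilon> (\<rho> t) / warpA \<phi> r \<epsilon> (\<rho> t) * (1 - (\<rho>' t)\<^sup>2))) (at t)))"

definition rho :: "(real \<Rightarrow> real) \<Rightarrow> real \<Rightarrow> real \<Rightarrow> real \<Rightarrow> real \<Rightarrow> real" where
  "rho \<phi> s r \<epsilon> = (if s = 0 then (\<lambda>t. t) else (THE \<rho>. is_rho \<phi> s r \<epsilon> \<rho>))"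

definition Kperp :: "(real \<Rightarrow> real) \<Rightarrow> real \<Rightarrow> real \<Rightarrow> real \<Rightarrow> real" where
  "Kperp \<phi> r \<epsilon> x = (1 - (warpA' \<phi> r \<epsilon> x)\<^sup>2) / (warpA \<phi> r \<epsilon> x)\<^sup>2"

definition Kmu :: "(real \<Rightarrow> real) \<Rightarrow> real \<Rightarrow> real \<Rightarrow> real \<Rightarrow> real \<Rightarrow> real" where
  "Kmu \<phi> s r \<epsilon> t =
     (let d = deriv (rho \<phi> s r \<epsilon>) t; x = rho \<phi> s r \<epsilon> t in
      d\<^sup>2 * Kpar \<phi> r \<epsilon> x + (1 - d\<^sup>2) * Kperp \<phi> r \<epsilon> x)"

end

theory Submission
  imports Defs
begin

text \<open>
  The warping function \<open>A\<close> is \<open>sin\<close> on \<open>[0, r]\<close>; across the thin layer \<open>[r, r + \<epsilon>]\<close> it stays bounded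
  with \<open>A' \<ge> 1/4\<close>, and beyond it \<open>A'' = A\<close>, so that \<open>A' \<ge> 1/8\<close> on \<open>[0, \<infinity>)\<close> and \<open>A'\<^sup>2 - A\<^sup>2\<close> is a constant
  \<open>\<ge> -16\<close> there. Along a geodesic, Clairaut's relation \<open>(1 - \<rho>'\<^sup>2) A(\<rho>)\<^sup>2 = A(s)\<^sup>2\<close> gives \<open>\<bar>\<rho>'\<bar> < 1\<close> and
  \<open>\<rho> \<ge> s\<close>, and \<open>(A(\<rho>) \<rho>')' = A'(\<rho>) \<ge> 1/8\<close> gives \<open>A(\<rho>(t)) \<ge> t/8\<close>. So for \<open>t \<ge> 40\<close> the geodesic lies
  beyond the layer, where \<open>K\<^sup>\<parallel> = -1\<close>, and \<open>A(\<rho>) \<ge> 5\<close> forces \<open>A'(\<rho>)\<^sup>2 > 1\<close>, i.e. \<open>K\<^sup>\<perp> < 0\<close>; \<open>K\<^sub>\<mu>\<close> is a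
  convex combination of the two. All bounds are uniform in \<open>s\<close>, in \<open>\<bar>r - \<pi>/4\<bar> < 1/5\<close> and in \<open>\<epsilon> < 1/8\<close>.
  The functions \<open>A\<close> and \<open>\<rho>\<close>, defined by description, exist by Picard iteration and are unique by
  Gronwall's inequality.
\<close>

section \<open>Differential inequalities with an exceptional point\<close>

lemma DERIV_nonneg_imp_increasing_except:
  fixes f f' :: "real \<Rightarrow> real"
  assumes "a \<le> b" and cont: "continuous_on {a..b} f"
    and f': "\<And>x. a < x \<Longrightarrow> x < b \<Longrightarrow> x \<noteq> c \<Longrightarrow> (f has_real_derivative f' x) (at x)"
    and nonneg: "\<And>x. a < x \<Longrightarrow> x < b \<Longrightarrow> x \<noteq> c \<Longrightarrow> 0 \<le> f' x"
  shows "f a \<le> f b"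
proof -
  have mono: "f u \<le> f v" if uv: "a \<le> u" "u \<le> v" "v \<le> b" and c: "c \<notin> {u<..<v}" for u v
  proof (rule DERIV_nonneg_imp_increasing_open[OF \<open>u \<le> v\<close>])
    fix x assume "u < x" "x < v"
    with uv c f'[of x] nonneg[of x] show "\<exists>y. (f has_real_derivative y) (at x) \<and> 0 \<le> y"
      by auto
  next
    show "continuous_on {u..v} f"
      using uv by (intro continuous_on_subset[OF cont]) auto
  qed
  show ?thesis
  proof (cases "a < c \<and> c < b")
    case True
    then show ?thesis
      using mono[of a c] mono[of c b] by fastforce
  next
    case False
    then show ?thesis
      using mono[of a b] \<open>a \<le> b\<close> by fastforce
  qed
qed

lemma diff_ge_of_deriv_ge:
  fixes f f' :: "real \<Rightarrow> real"
  assumes "a \<le> b" and cont: "continuous_on {a..b} f"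
    and f': "\<And>x. a < x \<Longrightarrow> x < b \<Longrightarrow> x \<noteq> c \<Longrightarrow> (f has_real_derivative f' x) (at x)"
    and ge: "\<And>x. a < x \<Longrightarrow> x < b \<Longrightarrow> x \<noteq> c \<Longrightarrow> m \<le> f' x"
  shows "m * (b - a) \<le> f b - f a"
proof -
  have "(\<lambda>x. f x - m * x) a \<le> (\<lambda>x. f x - m * x) b"
  proof (rule DERIV_nonneg_imp_increasing_except[where c=c and f="\<lambda>x. f x - m * x" and f'="\<lambda>x. f' x - m"])
    show "continuous_on {a..b} (\<lambda>x. f x - m * x)"
      using cont by (intro continuous_intros)
  qed (use assms in \<open>auto intro!: derivative_eq_intros\<close>)
  then show ?thesis
    by (simp add: algebra_simps)
qed

lemma abs_diff_le_of_deriv_bound: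
  fixes f f' :: "real \<Rightarrow> real"
  assumes "a \<le> b" and cont: "continuous_on {a..b} f"
    and f': "\<And>x. a < x \<Longrightarrow> x < b \<Longrightarrow> x \<noteq> c \<Longrightarrow> (f has_real_derivative f' x) (at x)"
    and bound: "\<And>x. a < x \<Longrightarrow> x < b \<Longrightarrow> x \<noteq> c \<Longrightarrow> \<bar>f' x\<bar> \<le> M"
  shows "\<bar>f b - f a\<bar> \<le> M * (b - a)"
proof -
  have "- M * (b - a) \<le> f b - f a"
    by (rule diff_ge_of_deriv_ge[OF \<open>a \<le> b\<close> cont f']) (use bound in \<open>force simp: abs_le_iff\<close>)+
  moreover have "- M * (b - a) \<le> - f b - - f a"
    by (rule diff_ge_of_deriv_ge[where f'="\<lambda>x. - f' x", OF \<open>a \<le> b\<close>])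
      (use cont f' bound in \<open>auto intro: continuous_intros DERIV_minus simp: abs_le_iff\<close>)
  ultimately show ?thesis
    by (simp add: abs_le_iff)
qed

lemma gronwall_exp_bound:
  fixes f f' :: "real \<Rightarrow> real"
  assumes "a \<le> b" and cont: "continuous_on {a..b} f"
    and f': "\<And>x. a < x \<Longrightarrow> x < b \<Longrightarrow> x \<noteq> c \<Longrightarrow> (f has_real_derivative f' x) (at x)"
    and le: "\<And>x. a < x \<Longrightarrow> x < b \<Longrightarrow> x \<noteq> c \<Longrightarrow> f' x \<le> C * f x"
  shows "f b \<le> f a * exp (C * (b - a))"
proof -
  let ?g = "\<lambda>x. - (f x * exp (- C * (x - a)))"
  have "0 * (b - a) \<le> ?g b - ?g a"
  proof (rule diff_ge_of_deriv_ge[where c=c and f'="\<lambda>x. (C * f x - f' x) * exp (- C * (x - a))", OF \<open>a \<le> b\<close>])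
    show "continuous_on {a..b} ?g"
      using cont by (intro continuous_intros)
    fix x assume x: "a < x" "x < b" "x \<noteq> c"
    show "(?g has_real_derivative (C * f x - f' x) * exp (- C * (x - a))) (at x)"
      using f'[OF x] by (auto intro!: derivative_eq_intros simp: algebra_simps)
    show "0 \<le> (C * f x - f' x) * exp (- C * (x - a))"
      using le[OF x] by simp
  qed
  then have "f b * exp (- C * (b - a)) \<le> f a"
    by simp
  then have "f b * exp (- C * (b - a)) * exp (C * (b - a)) \<le> f a * exp (C * (b - a))"
    by (rule mult_right_mono) simp
  then show ?thesis
    by (simp add: mult.assoc flip: exp_add)
qed

lemma gronwall_eq_0:
  fixes E E' :: "real \<Rightarrow> real"
  assumes cont: "continuous_on UNIV E" and nonneg: "\<And>x. 0 \<le> E x" and E0: "E 0 = 0"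
    and E': "\<And>x. x \<noteq> c \<Longrightarrow> (E has_real_derivative E' x) (at x)"
    and bound: "\<And>x. x \<noteq> c \<Longrightarrow> \<bar>E' x\<bar> \<le> C * E x"
  shows "E t = 0"
proof -
  have "E t \<le> 0"
  proof (cases "0 \<le> t")
    case True
    have "E t \<le> E 0 * exp (C * (t - 0))"
      by (rule gronwall_exp_bound[OF True continuous_on_subset[OF cont] E'])
        (use bound in \<open>force simp: abs_le_iff\<close>)+
    then show ?thesis
      using E0 by simp
  next
    case False
    have "E (- (- t)) \<le> E (- 0) * exp (C * (- t - 0))"
    proof (rule gronwall_exp_bound[where f="\<lambda>x. E (- x)" and f'="\<lambda>x. - E' (- x)" and c="- c"])
      show "continuous_on {0..- t} (\<lambda>x. E (- x))"
        using cont by (intro continuous_on_compose2[OF cont] continuous_intros) auto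
      fix x assume "0 < x" "x < - t" "x \<noteq> - c"
      then show "((\<lambda>x. E (- x)) has_real_derivative - E' (- x)) (at x)" "- E' (- x) \<le> C * E (- x)"
        using DERIV_mirror[of E "E' (- x)" x] E'[of "- x"] bound[of "- x"] by (auto simp: abs_le_iff)
    qed (use False in auto)
    then show ?thesis
      using E0 by simp
  qed
  then show ?thesis
    using nonneg[of t] by simp
qed

lemma abs_deriv_energy_le:
  fixes a c X L M :: real
  assumes X: "\<bar>X\<bar> \<le> L * \<bar>a\<bar> + M * \<bar>c\<bar>" and "0 \<le> L" "0 \<le> M"
  shows "\<bar>2 * a * c + 2 * c * X\<bar> \<le> (1 + L + 2 * M) * (a\<^sup>2 + c\<^sup>2)"
proof -
  have amgm: "2 * \<bar>a\<bar> * \<bar>c\<bar> \<le> a\<^sup>2 + c\<^sup>2"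
    using sum_squares_bound[of "\<bar>a\<bar>" "\<bar>c\<bar>"] by simp
  have "\<bar>2 * a * c + 2 * c * X\<bar> \<le> 2 * \<bar>a\<bar> * \<bar>c\<bar> + 2 * \<bar>c\<bar> * \<bar>X\<bar>"
    by (simp add: abs_mult abs_triangle_ineq[THEN order_trans])
  also have "\<dots> \<le> 2 * \<bar>a\<bar> * \<bar>c\<bar> + 2 * \<bar>c\<bar> * (L * \<bar>a\<bar> + M * \<bar>c\<bar>)"
    using X by (simp add: mult_left_mono)
  also have "\<dots> = (1 + L) * (2 * \<bar>a\<bar> * \<bar>c\<bar>) + 2 * M * c\<^sup>2"
    by (simp add: algebra_simps power2_eq_square)
  also have "\<dots> \<le> (1 + L) * (a\<^sup>2 + c\<^sup>2) + 2 * M * (a\<^sup>2 + c\<^sup>2)"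
    using amgm assms by (intro add_mono mult_left_mono) auto
  finally show ?thesis
    by (simp add: algebra_simps)
qed

lemma second_order_ode_unique:
  fixes y1 y2 v1 v2 a1 a2 :: "real \<Rightarrow> real"
  assumes init: "y1 0 = y2 0" "v1 0 = v2 0"
    and y1: "\<And>x. (y1 has_real_derivative v1 x) (at x)" and y2: "\<And>x. (y2 has_real_derivative v2 x) (at x)"
    and cont: "continuous_on UNIV v1" "continuous_on UNIV v2"
    and v1: "\<And>x. x \<noteq> c \<Longrightarrow> (v1 has_real_derivative a1 x) (at x)"
    and v2: "\<And>x. x \<noteq> c \<Longrightarrow> (v2 has_real_derivative a2 x) (at x)"
    and lip: "\<And>x. x \<noteq> c \<Longrightarrow> \<bar>a1 x - a2 x\<bar> \<le> L * \<bar>y1 x - y2 x\<bar> + M * \<bar>v1 x - v2 x\<bar>"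
    and "0 \<le> L" "0 \<le> M"
  shows "y1 t = y2 t"
proof -
  let ?E = "\<lambda>x. (y1 x - y2 x)\<^sup>2 + (v1 x - v2 x)\<^sup>2"
  have "continuous_on UNIV y1" "continuous_on UNIV y2"
    using y1 y2 by (auto intro!: continuous_at_imp_continuous_on DERIV_isCont)
  with cont have cont_E: "continuous_on UNIV ?E"
    by (intro continuous_intros)
  have "?E t = 0"
  proof (rule gronwall_eq_0[where E="?E" and c=c and C="1 + L + 2 * M"
        and E'="\<lambda>x. 2 * (y1 x - y2 x) * (v1 x - v2 x) + 2 * (v1 x - v2 x) * (a1 x - a2 x)", OF cont_E])
    fix x assume x: "x \<noteq> c"
    show "(?E has_real_derivative 2 * (y1 x - y2 x) * (v1 x - v2 x) + 2 * (v1 x - v2 x) * (a1 x - a2 x)) (at x)"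
      by (rule derivative_eq_intros y1 y2 v1[OF x] v2[OF x] refl | simp add: algebra_simps)+
    show "\<bar>2 * (y1 x - y2 x) * (v1 x - v2 x) + 2 * (v1 x - v2 x) * (a1 x - a2 x)\<bar> \<le> (1 + L + 2 * M) * ?E x"
      by (rule abs_deriv_energy_le[OF lip[OF x]]) fact+
  qed (use init in auto)
  then show ?thesis
    by (simp add: sum_power2_eq_zero_iff)
qed

lemma exp_solution_unique:
  fixes f :: "real \<Rightarrow> real"
  assumes cont: "continuous_on {a..} f" and f': "\<And>x. a < x \<Longrightarrow> (f has_real_derivative k * f x) (at x)"
    and "a \<le> x"
  shows "f x = f a * exp (k * (x - a))"
proof -
  let ?g = "\<lambda>x. f x * exp (- k * (x - a))"
  have "?g x = ?g a"
  proof (cases "a < x")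
    case True
    show ?thesis
    proof (rule DERIV_isconst2[of a x ?g x])
      show "continuous_on {a..x} ?g"
        using cont by (auto intro!: continuous_intros intro: continuous_on_subset)
      fix y assume "a < y" "y < x"
      then show "(?g has_real_derivative 0) (at y)"
        using f'[of y] by (auto intro!: derivative_eq_intros simp: algebra_simps)
    qed (use True in auto)
  qed (use \<open>a \<le> x\<close> in auto)
  then have "f x * exp (- k * (x - a)) * exp (k * (x - a)) = f a * exp (k * (x - a))"
    by simp
  then show ?thesis
    by (simp add: mult.assoc flip: exp_add)
qed

section \<open>Global solutions of Lipschitz systems\<close>

lemma has_real_derivative_interval_integral:
  fixes f :: "real \<Rightarrow> real"
  assumes "continuous_on UNIV f"
  shows "((\<lambda>t. LBINT u=0..t. f u) has_real_derivative f x) (at x)"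
proof -
  have "((\<lambda>t. LBINT u=0..t. f u) has_vector_derivative f x) (at x within {-(\<bar>x\<bar>+1)..\<bar>x\<bar>+1})"
    using interval_integral_FTC2[of "-(\<bar>x\<bar>+1)" 0 "\<bar>x\<bar>+1" f x] continuous_on_subset[OF assms]
    by (simp add: zero_ereal_def)
  then show ?thesis
    by (simp add: has_real_derivative_iff_has_vector_derivative at_within_Icc_at)
qed

lemma abs_le_of_deriv_bound_nonneg:
  fixes f f' :: "real \<Rightarrow> real"
  assumes f0: "f 0 = 0" and t: "0 \<le> t"
    and f': "\<And>u. 0 \<le> u \<Longrightarrow> u \<le> t \<Longrightarrow> (f has_real_derivative f' u) (at u)"
    and bound: "\<And>u. 0 \<le> u \<Longrightarrow> u \<le> t \<Longrightarrow> \<bar>f' u\<bar> \<le> C * u ^ n / fact n"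
  shows "\<bar>f t\<bar> \<le> C * t ^ Suc n / fact (Suc n)"
proof -
  define h where "h u = C * u ^ Suc n / fact (Suc n)" for u :: real
  have h': "(h has_real_derivative C * u ^ n / fact n) (at u)" for u
  proof -
    have "(h has_real_derivative C * (Suc n * u ^ n) / fact (Suc n)) (at u)"
      unfolding h_def by (intro derivative_eq_intros) auto
    then show ?thesis
      by (simp add: fact_Suc field_simps del: of_nat_Suc)
  qed
  have cont: "continuous_on {0..t} f" "continuous_on {0..t} h"
    using f' h' by (auto intro!: continuous_at_imp_continuous_on DERIV_isCont)
  have "(\<lambda>u. h u + \<sigma> * f u) 0 \<le> (\<lambda>u. h u + \<sigma> * f u) t" if "\<bar>\<sigma>\<bar> = 1" for \<sigma>
  proof (rule DERIV_nonneg_imp_increasing_open[OF t])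
    fix x assume x: "0 < x" "x < t"
    have "\<bar>\<sigma> * f' x\<bar> \<le> C * x ^ n / fact n"
      using bound[of x] x that by (simp add: abs_mult)
    moreover have "((\<lambda>u. h u + \<sigma> * f u) has_real_derivative C * x ^ n / fact n + \<sigma> * f' x) (at x)"
      using x by (intro DERIV_add h' DERIV_cmult f') auto
    ultimately show "\<exists>y. ((\<lambda>u. h u + \<sigma> * f u) has_real_derivative y) (at x) \<and> 0 \<le> y"
      by (intro exI[of _ "C * x ^ n / fact n + \<sigma> * f' x"]) auto
  qed (use cont in \<open>auto intro!: continuous_intros\<close>)
  from this[of 1] this[of "-1"] show ?thesis
    using f0 by (auto simp: h_def)
qed

lemma abs_le_of_deriv_bound:
  fixes f f' :: "real \<Rightarrow> real"
  assumes f0: "f 0 = 0"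
    and f': "\<And>u. \<bar>u\<bar> \<le> \<bar>t\<bar> \<Longrightarrow> (f has_real_derivative f' u) (at u)"
    and bound: "\<And>u. \<bar>u\<bar> \<le> \<bar>t\<bar> \<Longrightarrow> \<bar>f' u\<bar> \<le> C * \<bar>u\<bar> ^ n / fact n"
  shows "\<bar>f t\<bar> \<le> C * \<bar>t\<bar> ^ Suc n / fact (Suc n)"
proof (cases "0 \<le> t")
  case True
  have "\<bar>f t\<bar> \<le> C * t ^ Suc n / fact (Suc n)"
  proof (rule abs_le_of_deriv_bound_nonneg[where f=f and f'=f', OF f0 True])
    fix u assume "0 \<le> u" "u \<le> t"
    then show "(f has_real_derivative f' u) (at u)" "\<bar>f' u\<bar> \<le> C * u ^ n / fact n"
      using f'[of u] bound[of u] by auto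
  qed
  then show ?thesis
    using True by simp
next
  case False
  have "\<bar>f (- (- t))\<bar> \<le> C * (- t) ^ Suc n / fact (Suc n)"
  proof (rule abs_le_of_deriv_bound_nonneg[where f="\<lambda>u. f (- u)" and f'="\<lambda>u. - f' (- u)"])
    fix u assume u: "0 \<le> u" "u \<le> - t"
    show "((\<lambda>u. f (- u)) has_real_derivative - f' (- u)) (at u)"
      using DERIV_mirror f'[of "- u"] u by simp
    show "\<bar>- f' (- u)\<bar> \<le> C * u ^ n / fact n"
      using bound[of "- u"] u by simp
  qed (use f0 False in auto)
  then show ?thesis
    using False by simp
qed

lemma lipschitz_increment_bound:
  fixes f Y Z Y' Z' :: "real \<Rightarrow> real"
  assumes f0: "f 0 = 0"
    and f': "\<And>u. (f has_real_derivative H u (Y' u) (Z' u) - H u (Y u) (Z u)) (at u)"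
    and lip: "\<And>u y z y' z'. \<bar>H u y z - H u y' z'\<bar> \<le> L * (\<bar>y - y'\<bar> + \<bar>z - z'\<bar>)" and L: "0 \<le> L"
    and prev: "\<And>u. \<bar>u\<bar> \<le> \<bar>t\<bar> \<Longrightarrow> \<bar>Y' u - Y u\<bar> + \<bar>Z' u - Z u\<bar> \<le> D * \<bar>u\<bar> ^ n / fact n"
  shows "\<bar>f t\<bar> \<le> L * D * \<bar>t\<bar> ^ Suc n / fact (Suc n)"
proof (rule abs_le_of_deriv_bound[OF f0 f'])
  fix u assume "\<bar>u\<bar> \<le> \<bar>t\<bar>"
  then have "L * (\<bar>Y' u - Y u\<bar> + \<bar>Z' u - Z u\<bar>) \<le> L * (D * \<bar>u\<bar> ^ n / fact n)"
    using prev L by (intro mult_left_mono)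
  with lip[of u "Y' u" "Z' u" "Y u" "Z u"]
  show "\<bar>H u (Y' u) (Z' u) - H u (Y u) (Z u)\<bar> \<le> L * D * \<bar>u\<bar> ^ n / fact n"
    by (simp add: algebra_simps)
qed

lemma uniform_limit_of_summable_increments:
  fixes f :: "nat \<Rightarrow> 'a \<Rightarrow> real"
  assumes "\<And>n x. x \<in> S \<Longrightarrow> \<bar>f (Suc n) x - f n x\<bar> \<le> M n" and "summable M"
  shows "uniform_limit S f (\<lambda>x. lim (\<lambda>n. f n x)) sequentially"
proof -
  have "uniform_limit S (\<lambda>n x. \<Sum>i<n. f (Suc i) x - f i x) (\<lambda>x. \<Sum>i. f (Suc i) x - f i x) sequentially"
    by (rule Weierstrass_m_test[OF _ assms(2)]) (use assms(1) in auto)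
  then have "uniform_limit S (\<lambda>n x. f 0 x + (\<Sum>i<n. f (Suc i) x - f i x))
      (\<lambda>x. f 0 x + (\<Sum>i. f (Suc i) x - f i x)) sequentially"
    by (intro uniform_limit_add uniform_limit_const)
  moreover have "f 0 x + (\<Sum>i<n. f (Suc i) x - f i x) = f n x" for n x
    by (induction n) simp_all
  ultimately have limit: "uniform_limit S f (\<lambda>x. f 0 x + (\<Sum>i. f (Suc i) x - f i x)) sequentially"
    by simp
  have "lim (\<lambda>n. f n x) = f 0 x + (\<Sum>i. f (Suc i) x - f i x)" if "x \<in> S" for x
    using limI[OF tendsto_uniform_limitI[OF limit that]] .
  with limit show ?thesis
    by (subst uniform_limit_cong'[where g=f]) auto
qed

lemma uniform_limit_lipschitz_compose:
  fixes Y Z :: "nat \<Rightarrow> 'a \<Rightarrow> real" and H :: "'a \<Rightarrow> real \<Rightarrow> real \<Rightarrow> real"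
  assumes Y: "uniform_limit S Y y F" and Z: "uniform_limit S Z z F"
    and lip: "\<And>t y z y' z'. \<bar>H t y z - H t y' z'\<bar> \<le> L * (\<bar>y - y'\<bar> + \<bar>z - z'\<bar>)" and L: "0 < L"
  shows "uniform_limit S (\<lambda>n t. H t (Y n t) (Z n t)) (\<lambda>t. H t (y t) (z t)) F"
proof (rule uniform_limitI)
  fix e :: real assume "0 < e"
  then have "0 < e / (2 * L)"
    using L by simp
  from eventually_conj[OF uniform_limitD[OF Y this] uniform_limitD[OF Z this]]
  show "\<forall>\<^sub>F n in F. \<forall>t\<in>S. dist (H t (Y n t) (Z n t)) (H t (y t) (z t)) < e"
  proof (rule eventually_mono, intro ballI)
    fix n t
    assume "(\<forall>t\<in>S. dist (Y n t) (y t) < e / (2 * L)) \<and> (\<forall>t\<in>S. dist (Z n t) (z t) < e / (2 * L))"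
      and "t \<in> S"
    then have "L * (\<bar>Y n t - y t\<bar> + \<bar>Z n t - z t\<bar>) < L * (e / (2 * L) + e / (2 * L))"
      using L by (intro mult_strict_left_mono add_strict_mono) (auto simp: dist_real_def)
    also have "\<dots> = e"
      using L by (simp add: field_simps)
    finally show "dist (H t (Y n t) (Z n t)) (H t (y t) (z t)) < e"
      using lip[of t] unfolding dist_real_def by (rule le_less_trans[rotated])
  qed
qed

lemma has_real_derivative_uniform_limit:
  fixes W Y Z :: "nat \<Rightarrow> real \<Rightarrow> real" and F :: "real \<Rightarrow> real \<Rightarrow> real \<Rightarrow> real"
  assumes W: "uniform_limit {a<..<b} W w sequentially"
    and Y: "uniform_limit {a<..<b} Y y sequentially"
    and Z: "uniform_limit {a<..<b} Z z sequentially"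
    and x: "x \<in> {a<..<b}"
    and lip: "\<And>t y z y' z'. \<bar>F t y z - F t y' z'\<bar> \<le> L * (\<bar>y - y'\<bar> + \<bar>z - z'\<bar>)" and L: "0 < L"
    and W': "\<And>n t. (W (Suc n) has_real_derivative F t (Y n t) (Z n t)) (at t)"
  shows "(w has_real_derivative F x (y x) (z x)) (at x)"
proof -
  let ?S = "{a<..<b}"
  have W'_within: "((\<lambda>u. W (Suc n) u) has_derivative (*) (F u (Y n u) (Z n u))) (at u within ?S)" for n u
    using W' unfolding has_field_derivative_def by (rule has_derivative_at_withinI)
  have W'_uniform: "\<forall>\<^sub>F n in sequentially. \<forall>u\<in>?S. \<forall>h.
      norm (F u (Y n u) (Z n u) * h - F u (y u) (z u) * h) \<le> e * norm h" if "e > 0" for e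
    using uniform_limitD[OF uniform_limit_lipschitz_compose[OF Y Z lip L] that]
  proof (rule eventually_mono, intro ballI allI)
    fix n u h
    assume "\<forall>t\<in>?S. dist (F t (Y n t) (Z n t)) (F t (y t) (z t)) < e" and "u \<in> ?S"
    then have "\<bar>F u (Y n u) (Z n u) - F u (y u) (z u)\<bar> \<le> e"
      unfolding dist_real_def by (metis less_imp_le)
    then show "norm (F u (Y n u) (Z n u) * h - F u (y u) (z u) * h) \<le> e * norm h"
      by (simp add: left_diff_distrib[symmetric] abs_mult mult_right_mono)
  qed
  have "(\<lambda>n. W (Suc n) x) \<longlonglongrightarrow> w x"
    using tendsto_uniform_limitI[OF W x] by (rule LIMSEQ_Suc)
  from has_derivative_sequence[OF convex_real_interval(8) W'_within W'_uniform x this]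
  obtain g where g: "\<forall>u\<in>?S. (\<lambda>n. W (Suc n) u) \<longlonglongrightarrow> g u \<and> (g has_derivative (*) (F u (y u) (z u))) (at u within ?S)"
    by blast
  have gw: "g u = w u" if "u \<in> ?S" for u
    using LIMSEQ_unique[OF conjunct1[OF g[rule_format, OF that]] LIMSEQ_Suc[OF tendsto_uniform_limitI[OF W that]]] .
  have "at x within ?S = at x"
    using x by (intro at_within_open) auto
  moreover have "(g has_derivative (*) (F x (y x) (z x))) (at x within ?S)"
    using g x by blast
  ultimately have "(g has_real_derivative F x (y x) (z x)) (at x)"
    by (simp add: has_field_derivative_def)
  then show ?thesis
    by (rule has_field_derivative_transform_within_open[where S="?S"]) (use x gw in auto)
qed

locale lipschitz_system =
  fixes F G :: "real \<Rightarrow> real \<Rightarrow> real \<Rightarrow> real" and L :: real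
  assumes continuous_F: "\<And>Y Z. continuous_on UNIV Y \<Longrightarrow> continuous_on UNIV Z \<Longrightarrow>
      continuous_on UNIV (\<lambda>t. F t (Y t) (Z t))"
    and continuous_G: "\<And>Y Z. continuous_on UNIV Y \<Longrightarrow> continuous_on UNIV Z \<Longrightarrow>
      continuous_on UNIV (\<lambda>t. G t (Y t) (Z t))"
    and lipschitz_F: "\<And>t y z y' z'. \<bar>F t y z - F t y' z'\<bar> \<le> L * (\<bar>y - y'\<bar> + \<bar>z - z'\<bar>)"
    and lipschitz_G: "\<And>t y z y' z'. \<bar>G t y z - G t y' z'\<bar> \<le> L * (\<bar>y - y'\<bar> + \<bar>z - z'\<bar>)"
    and L_pos: "0 < L"
begin

primrec picard :: "real \<Rightarrow> real \<Rightarrow> nat \<Rightarrow> (real \<Rightarrow> real) \<times> (real \<Rightarrow> real)" where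
  "picard y0 z0 0 = (\<lambda>t. y0, \<lambda>t. z0)"
| "picard y0 z0 (Suc n) =
    (\<lambda>t. y0 + (LBINT u=0..t. F u (fst (picard y0 z0 n) u) (snd (picard y0 z0 n) u)),
     \<lambda>t. z0 + (LBINT u=0..t. G u (fst (picard y0 z0 n) u) (snd (picard y0 z0 n) u)))"

lemma picard_deriv_of_continuous:
  assumes "continuous_on UNIV (fst (picard y0 z0 n))" "continuous_on UNIV (snd (picard y0 z0 n))"
  shows "(fst (picard y0 z0 (Suc n)) has_real_derivative
      F t (fst (picard y0 z0 n) t) (snd (picard y0 z0 n) t)) (at t)"
    "(snd (picard y0 z0 (Suc n)) has_real_derivative
      G t (fst (picard y0 z0 n) t) (snd (picard y0 z0 n) t)) (at t)"
  using DERIV_add[OF DERIV_const has_real_derivative_interval_integral[OF continuous_F[OF assms]]]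
    DERIV_add[OF DERIV_const has_real_derivative_interval_integral[OF continuous_G[OF assms]]]
  by simp_all

lemma picard_continuous:
  "continuous_on UNIV (fst (picard y0 z0 n)) \<and> continuous_on UNIV (snd (picard y0 z0 n))"
proof (induction n)
  case (Suc n)
  then show ?case
    using picard_deriv_of_continuous[of y0 z0 n]
    by (intro conjI continuous_at_imp_continuous_on ballI; metis DERIV_isCont)
qed simp

lemmas picard_deriv = picard_deriv_of_continuous[OF picard_continuous[THEN conjunct1] picard_continuous[THEN conjunct2]]

lemma picard_0: "fst (picard y0 z0 n) 0 = y0" "snd (picard y0 z0 n) 0 = z0"
  by (cases n; simp add: zero_ereal_def)+

declare picard.simps(2) [simp del]

lemma picard_increment_bound:
  assumes M: "\<And>u. \<bar>u\<bar> \<le> \<bar>t\<bar> \<Longrightarrow> \<bar>F u y0 z0\<bar> \<le> M \<and> \<bar>G u y0 z0\<bar> \<le> M"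
  shows "\<bar>fst (picard y0 z0 (Suc n)) t - fst (picard y0 z0 n) t\<bar>
       + \<bar>snd (picard y0 z0 (Suc n)) t - snd (picard y0 z0 n) t\<bar>
       \<le> 2 * M * (2 * L) ^ n * \<bar>t\<bar> ^ Suc n / fact (Suc n)"
  using M
proof (induction n arbitrary: t)
  case 0
  have "\<bar>fst (picard y0 z0 (Suc 0)) t - y0\<bar> \<le> M * \<bar>t\<bar> ^ Suc 0 / fact (Suc 0)"
    by (rule abs_le_of_deriv_bound[where f="\<lambda>t. fst (picard y0 z0 (Suc 0)) t - y0" and f'="\<lambda>u. F u y0 z0"])
      (use DERIV_diff[OF picard_deriv(1)[of y0 z0 0] DERIV_const] picard_0 0 in auto)
  moreover have "\<bar>snd (picard y0 z0 (Suc 0)) t - z0\<bar> \<le> M * \<bar>t\<bar> ^ Suc 0 / fact (Suc 0)"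
    by (rule abs_le_of_deriv_bound[where f="\<lambda>t. snd (picard y0 z0 (Suc 0)) t - z0" and f'="\<lambda>u. G u y0 z0"])
      (use DERIV_diff[OF picard_deriv(2)[of y0 z0 0] DERIV_const] picard_0 0 in auto)
  ultimately show ?case
    by simp
next
  case (Suc n)
  let ?Y = "\<lambda>k. fst (picard y0 z0 k)" and ?Z = "\<lambda>k. snd (picard y0 z0 k)"
  let ?D = "2 * M * (2 * L) ^ n"
  have prev: "\<bar>?Y (Suc n) u - ?Y n u\<bar> + \<bar>?Z (Suc n) u - ?Z n u\<bar> \<le> ?D * \<bar>u\<bar> ^ Suc n / fact (Suc n)"
    if "\<bar>u\<bar> \<le> \<bar>t\<bar>" for u
    using Suc that by force
  have "\<bar>?Y (Suc (Suc n)) t - ?Y (Suc n) t\<bar> \<le> L * ?D * \<bar>t\<bar> ^ Suc (Suc n) / fact (Suc (Suc n))"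
    by (rule lipschitz_increment_bound[OF _ DERIV_diff[OF picard_deriv(1) picard_deriv(1)] lipschitz_F _ prev])
      (use L_pos picard_0 in auto)
  moreover have "\<bar>?Z (Suc (Suc n)) t - ?Z (Suc n) t\<bar> \<le> L * ?D * \<bar>t\<bar> ^ Suc (Suc n) / fact (Suc (Suc n))"
    by (rule lipschitz_increment_bound[OF _ DERIV_diff[OF picard_deriv(2) picard_deriv(2)] lipschitz_G _ prev])
      (use L_pos picard_0 in auto)
  ultimately have "\<bar>?Y (Suc (Suc n)) t - ?Y (Suc n) t\<bar> + \<bar>?Z (Suc (Suc n)) t - ?Z (Suc n) t\<bar>
      \<le> 2 * (L * ?D * \<bar>t\<bar> ^ Suc (Suc n) / fact (Suc (Suc n)))"
    by linarith
  then show ?case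
    by (simp add: algebra_simps)
qed

lemma picard_uniform_limit:
  "uniform_limit {-N..N} (\<lambda>n. fst (picard y0 z0 n)) (\<lambda>x. lim (\<lambda>n. fst (picard y0 z0 n) x)) sequentially"
  "uniform_limit {-N..N} (\<lambda>n. snd (picard y0 z0 n)) (\<lambda>x. lim (\<lambda>n. snd (picard y0 z0 n) x)) sequentially"
proof -
  have "continuous_on {-N..N} (\<lambda>u. \<bar>F u y0 z0\<bar> + \<bar>G u y0 z0\<bar>)"
    using continuous_F[of "\<lambda>_. y0" "\<lambda>_. z0"] continuous_G[of "\<lambda>_. y0" "\<lambda>_. z0"]
    by (intro continuous_intros) (auto intro: continuous_on_subset)
  then obtain M where M: "\<And>u. u \<in> {-N..N} \<Longrightarrow> norm (\<bar>F u y0 z0\<bar> + \<bar>G u y0 z0\<bar>) \<le> M"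
    using continuous_on_compact_bound[OF compact_Icc] by blast
  define Ms where "Ms i = 2 * M * N * (inverse (fact i) * (2 * L * N) ^ i)" for i :: nat
  have increment_le: "\<bar>fst (picard y0 z0 (Suc i)) t - fst (picard y0 z0 i) t\<bar>
      + \<bar>snd (picard y0 z0 (Suc i)) t - snd (picard y0 z0 i) t\<bar> \<le> Ms i"
    if t: "t \<in> {-N..N}" for t i
  proof -
    have "\<bar>F u y0 z0\<bar> \<le> M \<and> \<bar>G u y0 z0\<bar> \<le> M" if "\<bar>u\<bar> \<le> \<bar>t\<bar>" for u
    proof -
      have "u \<in> {-N..N}"
        using that t by auto
      with M[of u] show ?thesis
        by auto
    qed
    then have "\<bar>fst (picard y0 z0 (Suc i)) t - fst (picard y0 z0 i) t\<bar>
      + \<bar>snd (picard y0 z0 (Suc i)) t - snd (picard y0 z0 i) t\<bar>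
      \<le> 2 * M * (2 * L) ^ i * (\<bar>t\<bar> ^ Suc i / fact (Suc i))"
      using picard_increment_bound by simp
    also have "\<dots> \<le> 2 * M * (2 * L) ^ i * (N ^ Suc i / fact i)"
      using t M[OF t] L_pos by (intro mult_left_mono frac_le power_mono fact_mono) auto
    also have "\<dots> = Ms i"
      by (simp add: Ms_def field_simps power_mult_distrib)
    finally show ?thesis .
  qed
  have "summable Ms"
    unfolding Ms_def by (intro summable_mult summable_exp)
  then show
    "uniform_limit {-N..N} (\<lambda>n. fst (picard y0 z0 n)) (\<lambda>x. lim (\<lambda>n. fst (picard y0 z0 n) x)) sequentially"
    "uniform_limit {-N..N} (\<lambda>n. snd (picard y0 z0 n)) (\<lambda>x. lim (\<lambda>n. snd (picard y0 z0 n) x)) sequentially"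
    by (intro uniform_limit_of_summable_increments[where M=Ms]; use increment_le in \<open>smt (verit)\<close>)+
qed

theorem solution_exists:
  "\<exists>y z. y 0 = y0 \<and> z 0 = z0 \<and>
     (\<forall>t. (y has_real_derivative F t (y t) (z t)) (at t) \<and> (z has_real_derivative G t (y t) (z t)) (at t))"
proof (intro exI conjI allI)
  let ?y = "\<lambda>x. lim (\<lambda>n. fst (picard y0 z0 n) x)" and ?z = "\<lambda>x. lim (\<lambda>n. snd (picard y0 z0 n) x)"
  show "?y 0 = y0" "?z 0 = z0"
    by (simp_all only: picard_0 lim_const)
  fix t :: real
  define N where "N = \<bar>t\<bar> + 1"
  have t: "t \<in> {-N<..<N}" and sub: "{-N<..<N} \<subseteq> {-N..N}"
    by (auto simp: N_def)
  note Y = uniform_limit_on_subset[OF picard_uniform_limit(1) sub]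
    and Z = uniform_limit_on_subset[OF picard_uniform_limit(2) sub]
  show "(?y has_real_derivative F t (?y t) (?z t)) (at t)"
    by (rule has_real_derivative_uniform_limit[where W="\<lambda>n. fst (picard y0 z0 n)" and Y="\<lambda>n. fst (picard y0 z0 n)"
          and Z="\<lambda>n. snd (picard y0 z0 n)", OF Y Y Z t lipschitz_F L_pos picard_deriv(1)])
  show "(?z has_real_derivative G t (?y t) (?z t)) (at t)"
    by (rule has_real_derivative_uniform_limit[where W="\<lambda>n. snd (picard y0 z0 n)" and Y="\<lambda>n. fst (picard y0 z0 n)"
          and Z="\<lambda>n. snd (picard y0 z0 n)", OF Z Y Z t lipschitz_G L_pos picard_deriv(2)])
qed

end

section \<open>The warping function\<close>

locale warp_params =
  fixes \<phi> :: "real \<Rightarrow> real" and r \<epsilon> :: real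
  assumes cutoff: "cutoff \<phi>" and eps_nonneg: "0 \<le> \<epsilon>" and eps_small: "\<epsilon> < 1/8"
    and r_pos: "0 < r" and r_small: "r < pi / 3"
begin

abbreviation "K \<equiv> Kpar \<phi> r \<epsilon>"
abbreviation "A \<equiv> warpA \<phi> r \<epsilon>"
abbreviation "A' \<equiv> warpA' \<phi> r \<epsilon>"

lemma Kpar_abs_le: "\<bar>K x\<bar> \<le> 1"
  using cutoff by (auto simp: cutoff_def Kpar_def heaviside_def abs_le_iff)

lemma Kpar_eq_1: "x \<le> r \<Longrightarrow> K x = 1"
  using cutoff eps_nonneg by (auto simp: cutoff_def Kpar_def heaviside_def divide_nonpos_pos)

lemma Kpar_eq_minus_1: "r + \<epsilon> < x \<Longrightarrow> K x = -1"
  using cutoff eps_nonneg by (auto simp: cutoff_def Kpar_def heaviside_def field_simps)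

lemma continuous_Kpar:
  assumes "0 < \<epsilon>"
  shows "continuous_on UNIV K"
proof -
  have "continuous_on UNIV \<phi>"
    using cutoff unfolding cutoff_def smooth_fun_def
    by (metis funpow_0 continuous_at_imp_continuous_on differentiable_imp_continuous_within)
  then show ?thesis
    using assms unfolding Kpar_def by (auto intro!: continuous_intros continuous_on_compose2[of UNIV \<phi>])
qed

lemma warp_exists_pos:
  assumes "0 < \<epsilon>"
  shows "\<exists>A. is_warp \<phi> r \<epsilon> A"
proof -
  interpret lipschitz_system "\<lambda>t y z. z" "\<lambda>t y z. - K t * y" 1
  proof
    fix t y z y' z' :: real
    have "\<bar>- K t * y - - K t * y'\<bar> = \<bar>K t\<bar> * \<bar>y - y'\<bar>"
      by (simp add: abs_mult[symmetric] algebra_simps)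
    also have "\<dots> \<le> \<bar>y - y'\<bar>"
      using Kpar_abs_le by (simp add: mult_left_le_one_le)
    finally show "\<bar>- K t * y - - K t * y'\<bar> \<le> 1 * (\<bar>y - y'\<bar> + \<bar>z - z'\<bar>)"
      by simp
  qed (use continuous_Kpar[OF assms] in \<open>auto intro!: continuous_intros\<close>)
  obtain y z where "y 0 = 0" "z 0 = 1"
    "\<And>t. (y has_real_derivative z t) (at t)" "\<And>t. (z has_real_derivative - K t * y t) (at t)"
    using solution_exists[of 0 1] by blast
  moreover from this have "continuous_on UNIV z"
    by (intro continuous_at_imp_continuous_on ballI DERIV_isCont)
  ultimately show ?thesis
    unfolding is_warp_def by blast
qed

text \<open>For \<open>\<epsilon> = 0\<close> the solution is explicit: \<open>sin\<close> up to \<open>r\<close>, continued as a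
  solution of \<open>A'' = A\<close>.\<close>

definition "warp0 x = (if x \<le> r then sin x else sin r * cosh (x - r) + cos r * sinh (x - r))"
definition "warp0' x = (if x \<le> r then cos x else sin r * sinh (x - r) + cos r * cosh (x - r))"

lemma has_real_derivative_warp0: "(warp0 has_real_derivative warp0' x) (at x)"
proof -
  let ?S = "{..r}" and ?T = "{r<..}"
  have "(warp0 has_derivative (if x \<in> ?S then (*) (cos x) else (*) (sin r * sinh (x - r) + cos r * cosh (x - r))))
      (at x within (?S \<union> ?T))"
    unfolding warp0_def[abs_def] atMost_iff[symmetric]
  proof (rule has_derivative_If_within_closures)
    show "(sin has_derivative (*) (cos x)) (at x within ?S \<union> (closure ?S \<inter> closure ?T))"
      by (rule has_derivative_at_withinI) (simp add: has_field_derivative_def[symmetric] DERIV_sin)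
    have "((\<lambda>x. sin r * cosh (x - r) + cos r * sinh (x - r)) has_real_derivative
        sin r * sinh (x - r) + cos r * cosh (x - r)) (at x)"
      by (auto intro!: derivative_eq_intros)
    then show "((\<lambda>x. sin r * cosh (x - r) + cos r * sinh (x - r)) has_derivative
        (*) (sin r * sinh (x - r) + cos r * cosh (x - r))) (at x within ?T \<union> (closure ?S \<inter> closure ?T))"
      unfolding has_field_derivative_def by (rule has_derivative_at_withinI)
  qed auto
  moreover have "?S \<union> ?T = UNIV"
    by auto
  ultimately show ?thesis
    by (simp add: has_field_derivative_def warp0'_def if_distrib[of "(*)"])
qed

lemma continuous_warp0': "continuous_on UNIV warp0'"
proof -
  have "continuous_on ({..r} \<union> {r..}) warp0'"
    unfolding warp0'_def atMost_iff[symmetric] by (rule continuous_on_If) (auto intro!: continuous_intros)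
  moreover have "{..r} \<union> {r..} = (UNIV :: real set)"
    by auto
  ultimately show ?thesis
    by simp
qed

lemma has_real_derivative_warp0':
  assumes "\<epsilon> = 0" "x \<noteq> r"
  shows "(warp0' has_real_derivative - K x * warp0 x) (at x)"
proof (cases "x < r")
  case True
  have "(cos has_real_derivative - sin x) (at x)"
    by (rule DERIV_cos)
  then have "(warp0' has_real_derivative - sin x) (at x)"
    by (rule has_field_derivative_transform_within_open[where S="{..<r}"]) (use True in \<open>auto simp: warp0'_def\<close>)
  then show ?thesis
    using True Kpar_eq_1[of x] by (simp add: warp0_def)
next
  case False
  have "((\<lambda>x. sin r * sinh (x - r) + cos r * cosh (x - r)) has_real_derivative
      sin r * cosh (x - r) + cos r * sinh (x - r)) (at x)"
    by (auto intro!: derivative_eq_intros)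
  then have "(warp0' has_real_derivative sin r * cosh (x - r) + cos r * sinh (x - r)) (at x)"
    by (rule has_field_derivative_transform_within_open[where S="{r<..}"])
      (use False assms in \<open>auto simp: warp0'_def\<close>)
  then show ?thesis
    using False assms Kpar_eq_minus_1[of x] by (simp add: warp0_def)
qed

lemma warp_exists: "\<exists>A. is_warp \<phi> r \<epsilon> A"
proof (cases "0 < \<epsilon>")
  case True
  then show ?thesis
    by (rule warp_exists_pos)
next
  case False
  then have "is_warp \<phi> r \<epsilon> warp0"
    unfolding is_warp_def using eps_nonneg r_pos
    by (intro exI[of _ warp0'] conjI allI impI has_real_derivative_warp0 continuous_warp0'
        has_real_derivative_warp0') (auto simp: warp0_def warp0'_def)
  then show ?thesis
    by blast
qed

lemma warp_unique:
  assumes "is_warp \<phi> r \<epsilon> A1" "is_warp \<phi> r \<epsilon> A2"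
  shows "A1 = A2"
proof
  fix t
  obtain B1 where B1: "A1 0 = 0" "B1 0 = 1" "\<And>x. (A1 has_real_derivative B1 x) (at x)" "continuous_on UNIV B1"
    "\<And>x. x \<noteq> r \<Longrightarrow> (B1 has_real_derivative - K x * A1 x) (at x)"
    using assms(1) unfolding is_warp_def by blast
  obtain B2 where B2: "A2 0 = 0" "B2 0 = 1" "\<And>x. (A2 has_real_derivative B2 x) (at x)" "continuous_on UNIV B2"
    "\<And>x. x \<noteq> r \<Longrightarrow> (B2 has_real_derivative - K x * A2 x) (at x)"
    using assms(2) unfolding is_warp_def by blast
  show "A1 t = A2 t"
  proof (rule second_order_ode_unique[OF _ _ B1(3) B2(3) B1(4) B2(4) B1(5) B2(5), where L=1 and M=0])
    fix x
    have "\<bar>- K x * A1 x - - K x * A2 x\<bar> = \<bar>K x\<bar> * \<bar>A1 x - A2 x\<bar>"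
      by (simp add: abs_mult[symmetric] algebra_simps)
    then show "\<bar>- K x * A1 x - - K x * A2 x\<bar> \<le> 1 * \<bar>A1 x - A2 x\<bar> + 0 * \<bar>B1 x - B2 x\<bar>"
      using Kpar_abs_le[of x] by (simp add: mult_left_le_one_le)
  qed (use B1 B2 in auto)
qed

lemma warpA_ode:
  "A 0 = 0" "A' 0 = 1" "\<And>x. (A has_real_derivative A' x) (at x)" "continuous_on UNIV A'"
  "\<And>x. x \<noteq> r \<Longrightarrow> (A' has_real_derivative - K x * A x) (at x)"
proof -
  have "is_warp \<phi> r \<epsilon> A"
    unfolding warpA_def using warp_exists warp_unique by (metis theI)
  then obtain B where B: "A 0 = 0" "B 0 = 1" "\<And>x. (A has_real_derivative B x) (at x)" "continuous_on UNIV B"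
    "\<And>x. x \<noteq> r \<Longrightarrow> (B has_real_derivative - K x * A x) (at x)"
    unfolding is_warp_def by blast
  moreover have "A' = B"
    unfolding warpA'_def using B(3) by (intro ext DERIV_imp_deriv)
  ultimately show "A 0 = 0" "A' 0 = 1" "\<And>x. (A has_real_derivative A' x) (at x)" "continuous_on UNIV A'"
    "\<And>x. x \<noteq> r \<Longrightarrow> (A' has_real_derivative - K x * A x) (at x)"
    by auto
qed

lemma continuous_warpA: "continuous_on UNIV A"
  using warpA_ode(3) by (intro continuous_at_imp_continuous_on ballI DERIV_isCont)

lemma warp_eq_sin_cos:
  assumes "x \<le> r"
  shows "A x = sin x" "A' x = cos x"
proof -
  let ?D = "\<lambda>y. (A y - sin y)\<^sup>2 + (A' y - cos y)\<^sup>2"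
  have const: "?D y = ?D (min x 0)" if "min x 0 \<le> y" "y \<le> r" for y
  proof (rule DERIV_isconst2[OF _ _ _ that])
    show "min x 0 < r" "continuous_on {min x 0..r} ?D"
      using r_pos continuous_warpA warpA_ode(4) by (auto intro!: continuous_intros intro: continuous_on_subset)
    fix y assume "min x 0 < y" "y < r"
    then have A'': "(A' has_real_derivative - K y * A y) (at y)"
      by (intro warpA_ode(5)) simp
    have "(?D has_real_derivative
        2 * (A y - sin y) * (A' y - cos y) + 2 * (A' y - cos y) * (- K y * A y + sin y)) (at y)"
      by (rule derivative_eq_intros warpA_ode(3) A'' refl | simp add: algebra_simps)+
    then show "(?D has_real_derivative 0) (at y)"
      using Kpar_eq_1[of y] \<open>y < r\<close> by (simp add: algebra_simps)
  qed
  have "?D x = 0"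
    using const[of x] const[of 0] assms r_pos warpA_ode(1,2) by simp
  then show "A x = sin x" "A' x = cos x"
    by (simp_all add: sum_power2_eq_zero_iff)
qed

lemma cos_r_gt: "1/2 < cos r"
  using cos_monotone_0_pi[of r "pi / 3"] r_pos r_small by (simp add: cos_60)

lemma warp_energy_le:
  assumes "r \<le> x" "x \<le> r + \<epsilon>"
  shows "(A x)\<^sup>2 + (A' x)\<^sup>2 \<le> 4"
proof -
  have "(A x)\<^sup>2 + (A' x)\<^sup>2 \<le> ((A r)\<^sup>2 + (A' r)\<^sup>2) * exp (2 * (x - r))"
  proof (rule gronwall_exp_bound[where c=r and f'="\<lambda>y. 2 * A y * A' y + 2 * A' y * (- K y * A y)"])
    show "continuous_on {r..x} (\<lambda>y. (A y)\<^sup>2 + (A' y)\<^sup>2)"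
      using continuous_warpA warpA_ode(4) by (auto intro!: continuous_intros intro: continuous_on_subset)
    fix y assume "r < y" "y < x" "y \<noteq> r"
    then have A'': "(A' has_real_derivative - K y * A y) (at y)"
      by (intro warpA_ode(5))
    show "((\<lambda>y. (A y)\<^sup>2 + (A' y)\<^sup>2) has_real_derivative 2 * A y * A' y + 2 * A' y * (- K y * A y)) (at y)"
      by (rule derivative_eq_intros warpA_ode(3) A'' refl | simp add: algebra_simps)+
    have "\<bar>- K y * A y\<bar> \<le> 1 * \<bar>A y\<bar> + 0 * \<bar>A' y\<bar>"
      using Kpar_abs_le[of y] by (simp add: abs_mult mult_left_le_one_le)
    from abs_deriv_energy_le[OF this] show "2 * A y * A' y + 2 * A' y * (- K y * A y) \<le> 2 * ((A y)\<^sup>2 + (A' y)\<^sup>2)"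
      by simp
  qed (use assms in auto)
  also have "\<dots> = exp (2 * (x - r))"
    using warp_eq_sin_cos[of r] by simp
  also have "\<dots> \<le> exp 1"
    using assms eps_small by simp
  also have "\<dots> \<le> 4"
    using exp_le by simp
  finally show ?thesis .
qed

lemma abs_warp_le:
  assumes "r \<le> x" "x \<le> r + \<epsilon>"
  shows "\<bar>A x\<bar> \<le> 2" "\<bar>A' x\<bar> \<le> 2"
proof -
  have "(A x)\<^sup>2 \<le> 4" "(A' x)\<^sup>2 \<le> 4"
    using warp_energy_le[OF assms] zero_le_power2[of "A x"] zero_le_power2[of "A' x"] by linarith+
  then show "\<bar>A x\<bar> \<le> 2" "\<bar>A' x\<bar> \<le> 2"
    using abs_le_square_iff[of "A x" 2] abs_le_square_iff[of "A' x" 2] by simp_all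
qed

lemma warp'_transition_ge:
  assumes "r \<le> x" "x \<le> r + \<epsilon>"
  shows "1/4 \<le> A' x"
proof -
  have "\<bar>A' x - A' r\<bar> \<le> 2 * (x - r)"
  proof (rule abs_diff_le_of_deriv_bound[where c=r and f'="\<lambda>y. - K y * A y"])
    fix y assume y: "r < y" "y < x" "y \<noteq> r"
    then show "(A' has_real_derivative - K y * A y) (at y)"
      by (intro warpA_ode(5))
    have "\<bar>K y\<bar> * \<bar>A y\<bar> \<le> 1 * 2"
      using Kpar_abs_le[of y] abs_warp_le[of y] y assms by (intro mult_mono) auto
    then show "\<bar>- K y * A y\<bar> \<le> 2"
      by (simp add: abs_mult)
  qed (use assms warpA_ode(4) in \<open>auto intro: continuous_on_subset\<close>)
  then show ?thesis
    using assms eps_small cos_r_gt warp_eq_sin_cos[of r] by simp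
qed

lemma warp_initial_bounds:
  assumes "0 \<le> x" "x \<le> r + \<epsilon>"
  shows "1/4 \<le> A' x" "\<bar>A x\<bar> \<le> 2" "\<bar>A' x\<bar> \<le> 2"
proof (atomize (full), cases "x \<le> r")
  case True
  have "cos r \<le> cos x"
    using True assms r_small pi_gt3 by (intro cos_monotone_0_pi_le) auto
  then show "1/4 \<le> A' x \<and> \<bar>A x\<bar> \<le> 2 \<and> \<bar>A' x\<bar> \<le> 2"
    unfolding warp_eq_sin_cos[OF True] using cos_r_gt abs_sin_le_one[of x] abs_cos_le_one[of x] by linarith
next
  case False
  then show "1/4 \<le> A' x \<and> \<bar>A x\<bar> \<le> 2 \<and> \<bar>A' x\<bar> \<le> 2"
    using warp'_transition_ge abs_warp_le assms by simp
qed

lemma warp_exp_formulas: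
  assumes "r + \<epsilon> \<le> x"
  shows "A x + A' x = (A (r + \<epsilon>) + A' (r + \<epsilon>)) * exp (x - (r + \<epsilon>))"
    and "A' x - A x = (A' (r + \<epsilon>) - A (r + \<epsilon>)) * exp (- (x - (r + \<epsilon>)))"
proof -
  have A'': "(A' has_real_derivative A y) (at y)" if "r + \<epsilon> < y" for y
    using warpA_ode(5)[of y] Kpar_eq_minus_1[OF that] that eps_nonneg by simp
  have cont: "continuous_on {r + \<epsilon>..} (\<lambda>y. A y + A' y)" "continuous_on {r + \<epsilon>..} (\<lambda>y. A' y - A y)"
    using continuous_warpA warpA_ode(4) by (auto intro!: continuous_intros intro: continuous_on_subset)
  have "((\<lambda>y. A y + A' y) has_real_derivative 1 * (A y + A' y)) (at y)" if "r + \<epsilon> < y" for y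
    using DERIV_add[OF warpA_ode(3) A''[OF that]] by (simp add: add.commute)
  from exp_solution_unique[OF cont(1) this assms]
  show "A x + A' x = (A (r + \<epsilon>) + A' (r + \<epsilon>)) * exp (x - (r + \<epsilon>))"
    by simp
  have "((\<lambda>y. A' y - A y) has_real_derivative -1 * (A' y - A y)) (at y)" if "r + \<epsilon> < y" for y
    using DERIV_diff[OF A''[OF that] warpA_ode(3)] by simp
  from exp_solution_unique[OF cont(2) this assms]
  show "A' x - A x = (A' (r + \<epsilon>) - A (r + \<epsilon>)) * exp (- (x - (r + \<epsilon>)))"
    by simp
qed

lemma warp_far_bounds:
  assumes "r + \<epsilon> \<le> x"
  shows "-16 \<le> (A' x)\<^sup>2 - (A x)\<^sup>2" "A' x - A x \<le> 4"
proof -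
  let ?u = "A (r + \<epsilon>) + A' (r + \<epsilon>)" and ?v = "A' (r + \<epsilon>) - A (r + \<epsilon>)" and ?y = "x - (r + \<epsilon>)"
  have uv: "\<bar>?u\<bar> \<le> 4" "\<bar>?v\<bar> \<le> 4"
    using warp_initial_bounds[of "r + \<epsilon>"] r_pos eps_nonneg by auto
  have "(A' x)\<^sup>2 - (A x)\<^sup>2 = (A' x - A x) * (A x + A' x)"
    by (simp add: power2_eq_square algebra_simps)
  also have "\<dots> = ?u * ?v * (exp (- ?y) * exp ?y)"
    unfolding warp_exp_formulas[OF assms] by (simp add: mult_ac)
  also have "\<dots> = ?u * ?v"
    by (simp flip: exp_add)
  finally have "(A' x)\<^sup>2 - (A x)\<^sup>2 = ?u * ?v" .
  moreover have "\<bar>?u * ?v\<bar> \<le> 4 * 4"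
    unfolding abs_mult using uv by (intro mult_mono) auto
  ultimately show "-16 \<le> (A' x)\<^sup>2 - (A x)\<^sup>2"
    by linarith
  have "?v * exp (- ?y) \<le> \<bar>?v\<bar> * exp (- ?y)"
    by (rule mult_right_mono) auto
  also have "\<dots> \<le> \<bar>?v\<bar>"
    using assms by (intro mult_right_le_one_le) auto
  finally show "A' x - A x \<le> 4"
    using warp_exp_formulas(2)[OF assms] uv by simp
qed

lemma warp'_ge:
  assumes "0 \<le> x"
  shows "1/8 \<le> A' x"
proof (cases "x \<le> r + \<epsilon>")
  case True
  then show ?thesis
    using warp_initial_bounds(1)[OF assms] by simp
next
  case False
  let ?u = "A (r + \<epsilon>) + A' (r + \<epsilon>)" and ?v = "A' (r + \<epsilon>) - A (r + \<epsilon>)" and ?y = "x - (r + \<epsilon>)"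
  have A'_b: "1/4 \<le> A' (r + \<epsilon>)"
    using warp_initial_bounds(1)[of "r + \<epsilon>"] r_pos eps_nonneg by simp
  have "1/4 * (r + \<epsilon> - 0) \<le> A (r + \<epsilon>) - A 0"
    by (rule diff_ge_of_deriv_ge[where c=r, OF _ continuous_on_subset[OF continuous_warpA] warpA_ode(3)])
      (use r_pos eps_nonneg warp_initial_bounds(1) in auto)
  then have u: "1/4 \<le> ?u"
    using A'_b r_pos eps_nonneg warpA_ode(1) by simp
  have "2 * A' x = ?u * exp ?y + ?v * exp (- ?y)"
    using warp_exp_formulas[of x] False by simp
  moreover have "?u \<le> ?u * exp ?y"
    using u False by simp
  moreover have "?v \<le> ?v * exp (- ?y)" if "?v < 0"
    using mult_left_mono_neg[of "exp (- ?y)" 1 ?v] that False by simp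
  moreover have "0 \<le> ?v * exp (- ?y)" if "0 \<le> ?v"
    using that by simp
  ultimately show ?thesis
    using u A'_b by (cases "0 \<le> ?v") linarith+
qed

lemma warp_increment_ge:
  assumes "0 \<le> x" "x \<le> y"
  shows "(y - x) / 8 \<le> A y - A x"
  using diff_ge_of_deriv_ge[where c=0 and m="1/8", OF assms(2) continuous_on_subset[OF continuous_warpA] warpA_ode(3)]
    warp'_ge assms by auto

lemma warp_pos: "0 < x \<Longrightarrow> 0 < A x"
  using warp_increment_ge[of 0 x] warpA_ode(1) by simp

end

section \<open>Geodesics\<close>

lemma abs_diff_mult_one_minus_sq_le:
  fixes g1 g2 v1 v2 :: real
  assumes "\<bar>g1 - g2\<bar> \<le> d" "0 \<le> g2" "g2 \<le> G" "v1\<^sup>2 < 1" "v2\<^sup>2 < 1"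
  shows "\<bar>g1 * (1 - v1\<^sup>2) - g2 * (1 - v2\<^sup>2)\<bar> \<le> d + 2 * G * \<bar>v1 - v2\<bar>"
proof -
  have v: "\<bar>v1\<bar> \<le> 1" "\<bar>v2\<bar> \<le> 1"
    using assms(4,5) by (simp_all add: abs_square_less_1 less_imp_le)
  have "\<bar>(g1 - g2) * (1 - v1\<^sup>2)\<bar> \<le> \<bar>g1 - g2\<bar> * 1"
    unfolding abs_mult using assms(4) by (intro mult_left_mono) auto
  moreover have "\<bar>g2 * ((v2 - v1) * (v2 + v1))\<bar> \<le> G * (\<bar>v1 - v2\<bar> * 2)"
    unfolding abs_mult using assms(2,3) v
    by (intro mult_mono) (auto simp: abs_minus_commute intro!: mult_left_mono order_trans[OF abs_triangle_ineq])
  moreover have "g1 * (1 - v1\<^sup>2) - g2 * (1 - v2\<^sup>2) = (g1 - g2) * (1 - v1\<^sup>2) + g2 * ((v2 - v1) * (v2 + v1))"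
    by (simp add: algebra_simps power2_eq_square)
  ultimately show ?thesis
    using assms(1) abs_triangle_ineq[of "(g1 - g2) * (1 - v1\<^sup>2)" "g2 * ((v2 - v1) * (v2 + v1))"] by simp
qed

context warp_params
begin

definition warp_ratio :: "real \<Rightarrow> real" where
  "warp_ratio x = A' x / A x"

lemma warp_ratio_bounds:
  assumes "0 < s" "s \<le> x"
  shows "0 \<le> warp_ratio x" "warp_ratio x \<le> 1 + 4 / A s"
proof -
  have As: "0 < A s" "A s \<le> A x"
    using warp_pos warp_increment_ge[of s x] assms by auto
  show "0 \<le> warp_ratio x"
    using As warp'_ge[of x] assms by (simp add: warp_ratio_def)
  show "warp_ratio x \<le> 1 + 4 / A s"
  proof (cases "x \<le> r + \<epsilon>")
    case True
    then have "A' x / A x \<le> 2 / A s"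
      using As warp_initial_bounds(3)[of x] assms by (intro frac_le) auto
    also have "\<dots> \<le> 1 + 4 / A s"
      using As by (simp add: field_simps)
    finally show ?thesis
      by (simp add: warp_ratio_def)
  next
    case False
    then have "A' x / A x \<le> (A x + 4) / A x"
      using As warp_far_bounds(2)[of x] by (intro divide_right_mono) auto
    also have "\<dots> = 1 + 4 / A x"
      using As by (simp add: field_simps)
    also have "\<dots> \<le> 1 + 4 / A s"
      using As by (simp add: frac_le)
    finally show ?thesis
      by (simp add: warp_ratio_def)
  qed
qed

lemma has_real_derivative_warp_ratio:
  assumes "0 < x" "x \<noteq> r"
  shows "(warp_ratio has_real_derivative - K x - (warp_ratio x)\<^sup>2) (at x)"
proof -
  have "A x \<noteq> 0"
    using warp_pos[OF assms(1)] by simp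
  with DERIV_divide[OF warpA_ode(5)[OF assms(2)] warpA_ode(3)] show ?thesis
    unfolding warp_ratio_def[abs_def] by (simp add: field_simps power2_eq_square)
qed

lemma continuous_warp_ratio:
  assumes "0 < s"
  shows "continuous_on {s..} warp_ratio"
proof -
  have "A x \<noteq> 0" if "x \<in> {s..}" for x
    using warp_pos[of x] assms that by force
  then show ?thesis
    unfolding warp_ratio_def[abs_def]
    by (intro continuous_on_divide continuous_on_subset[OF warpA_ode(4)] continuous_on_subset[OF continuous_warpA]) auto
qed

lemma warp_ratio_lipschitz:
  assumes "0 < s" "s \<le> x" "s \<le> y"
  shows "\<bar>warp_ratio x - warp_ratio y\<bar> \<le> (1 + (1 + 4 / A s)\<^sup>2) * \<bar>x - y\<bar>"
proof -
  have "\<bar>warp_ratio b - warp_ratio a\<bar> \<le> (1 + (1 + 4 / A s)\<^sup>2) * (b - a)" if "s \<le> a" "a \<le> b" for a b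
  proof (rule abs_diff_le_of_deriv_bound[where c=r and f'="\<lambda>z. - K z - (warp_ratio z)\<^sup>2", OF \<open>a \<le> b\<close>])
    show "continuous_on {a..b} warp_ratio"
      using continuous_warp_ratio[OF assms(1)] that by (auto intro: continuous_on_subset)
    fix z assume z: "a < z" "z < b" "z \<noteq> r"
    then show "(warp_ratio has_real_derivative - K z - (warp_ratio z)\<^sup>2) (at z)"
      using assms that by (intro has_real_derivative_warp_ratio) auto
    have "0 \<le> warp_ratio z" "warp_ratio z \<le> 1 + 4 / A s"
      using warp_ratio_bounds[OF assms(1), of z] z that by auto
    then have "(warp_ratio z)\<^sup>2 \<le> (1 + 4 / A s)\<^sup>2"
      by (intro power_mono)
    then show "\<bar>- K z - (warp_ratio z)\<^sup>2\<bar> \<le> 1 + (1 + 4 / A s)\<^sup>2"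
      using Kpar_abs_le[of z] zero_le_power2[of "warp_ratio z"] unfolding abs_le_iff by linarith
  qed
  then show ?thesis
    using assms by (cases "x \<le> y") (force simp: abs_minus_commute)+
qed

end

locale geodesic = warp_params +
  fixes s :: real and \<rho> v :: "real \<Rightarrow> real"
  assumes s_pos: "0 < s" and rho_0: "\<rho> 0 = s" and v_0: "v 0 = 0"
    and rho_deriv: "\<And>t. (\<rho> has_real_derivative v t) (at t)"
    and v_deriv: "\<And>t. (v has_real_derivative A' (\<rho> t) / A (\<rho> t) * (1 - (v t)\<^sup>2)) (at t)"
begin

lemma warp_rho_deriv: "((\<lambda>t. A (\<rho> t)) has_real_derivative A' (\<rho> t) * v t) (at t)"
  by (rule DERIV_chain2[OF warpA_ode(3) rho_deriv])

lemma clairaut_relation: "(1 - (v t)\<^sup>2) * (A (\<rho> t))\<^sup>2 = (A s)\<^sup>2"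
proof -
  have "\<forall>t. ((\<lambda>t. (1 - (v t)\<^sup>2) * (A (\<rho> t))\<^sup>2) has_real_derivative 0) (at t)"
  proof
    fix t
    have "((\<lambda>t. (1 - (v t)\<^sup>2) * (A (\<rho> t))\<^sup>2) has_real_derivative
        - (2 * v t * (A' (\<rho> t) / A (\<rho> t) * (1 - (v t)\<^sup>2))) * (A (\<rho> t))\<^sup>2
        + (1 - (v t)\<^sup>2) * (2 * A (\<rho> t) * (A' (\<rho> t) * v t))) (at t)"
      by (rule derivative_eq_intros v_deriv warp_rho_deriv refl | simp)+
    then show "((\<lambda>t. (1 - (v t)\<^sup>2) * (A (\<rho> t))\<^sup>2) has_real_derivative 0) (at t)"
      by (cases "A (\<rho> t) = 0") (simp_all add: field_simps power2_eq_square)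
  qed
  then have "(1 - (v t)\<^sup>2) * (A (\<rho> t))\<^sup>2 = (1 - (v 0)\<^sup>2) * (A (\<rho> 0))\<^sup>2"
    by (rule DERIV_isconst_all)
  then show ?thesis
    using rho_0 v_0 by simp
qed

lemma rho_pos: "0 < \<rho> t"
proof (rule ccontr)
  assume "\<not> 0 < \<rho> t"
  have "continuous_on UNIV \<rho>"
    using rho_deriv by (intro continuous_at_imp_continuous_on ballI DERIV_isCont)
  then have "connected (range \<rho>)"
    by (rule connected_continuous_image[OF _ connected_UNIV])
  moreover have "\<rho> t \<in> range \<rho>" "\<rho> 0 \<in> range \<rho>"
    by simp_all
  moreover have "\<rho> t \<le> 0" "0 \<le> \<rho> 0"
    using \<open>\<not> 0 < \<rho> t\<close> s_pos rho_0 by simp_all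
  ultimately have "0 \<in> range \<rho>"
    by (rule connectedD_interval)
  then obtain x where "\<rho> x = 0"
    by (metis rangeE)
  have "0 < (A s)\<^sup>2"
    using warp_pos[OF s_pos] by simp
  then show False
    using clairaut_relation[of x] warpA_ode(1) \<open>\<rho> x = 0\<close> by simp
qed

lemma speed_sq_lt_1: "(v t)\<^sup>2 < 1"
proof -
  have "0 < (1 - (v t)\<^sup>2) * (A (\<rho> t))\<^sup>2"
    using clairaut_relation[of t] warp_pos[OF s_pos] by simp
  moreover have "0 < (A (\<rho> t))\<^sup>2"
    using warp_pos[OF rho_pos[of t]] by simp
  ultimately have "0 < 1 - (v t)\<^sup>2"
    by (rule zero_less_mult_pos2)
  then show ?thesis
    by simp
qed

lemma rho_ge: "s \<le> \<rho> t"
proof (rule ccontr)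
  assume "\<not> s \<le> \<rho> t"
  then have "A (\<rho> t) < A s"
    using warp_increment_ge[of "\<rho> t" s] rho_pos[of t] by simp
  moreover have "(A s)\<^sup>2 \<le> (A (\<rho> t))\<^sup>2"
    using clairaut_relation[of t] mult_right_mono[of "1 - (v t)\<^sup>2" 1 "(A (\<rho> t))\<^sup>2"] by simp
  then have "A s \<le> A (\<rho> t)"
    using warp_pos[OF rho_pos[of t]] by (rule power2_le_imp_le[OF _ less_imp_le])
  ultimately show False
    by simp
qed

lemma warp_rho_ge:
  assumes "0 \<le> t"
  shows "t / 8 \<le> A (\<rho> t)"
proof -
  let ?P = "\<lambda>t. A (\<rho> t) * v t"
  have P': "(?P has_real_derivative A' (\<rho> t)) (at t)" for t
  proof -
    have "(?P has_real_derivative A' (\<rho> t) * v t * v t + A' (\<rho> t) / A (\<rho> t) * (1 - (v t)\<^sup>2) * A (\<rho> t)) (at t)"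
      by (rule DERIV_mult[OF warp_rho_deriv v_deriv])
    moreover have "A (\<rho> t) \<noteq> 0"
      using warp_pos[OF rho_pos[of t]] by simp
    ultimately show ?thesis
      by (simp add: field_simps power2_eq_square)
  qed
  have "1/8 * (t - 0) \<le> ?P t - ?P 0"
  proof (rule diff_ge_of_deriv_ge[where c=0, OF assms _ P'])
    show "continuous_on {0..t} ?P"
      using P' by (intro continuous_at_imp_continuous_on ballI DERIV_isCont)
    fix x
    show "1/8 \<le> A' (\<rho> x)"
      using warp'_ge[of "\<rho> x"] rho_pos[of x] by simp
  qed
  moreover have "v t \<le> 1"
    using speed_sq_lt_1[of t] by (simp add: abs_square_less_1 abs_less_iff)
  then have "?P t \<le> A (\<rho> t) * 1"
    using warp_pos[OF rho_pos[of t]] by (intro mult_left_mono) auto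
  ultimately show ?thesis
    using v_0 by simp
qed

end

lemma tanh_lipschitz: "\<bar>tanh a - tanh b\<bar> \<le> \<bar>a - b :: real\<bar>"
proof -
  have "\<bar>tanh y - tanh x\<bar> \<le> 1 * (y - x)" if "x \<le> y" for x y :: real
  proof (rule abs_diff_le_of_deriv_bound[where c=x and f'="\<lambda>z. 1 - (tanh z)\<^sup>2", OF that])
    fix z :: real
    have "((\<lambda>z. tanh z) has_real_derivative (1 - (tanh z)\<^sup>2) * 1) (at z)"
      by (rule has_field_derivative_tanh) (auto intro: DERIV_ident)
    then show "(tanh has_real_derivative 1 - (tanh z)\<^sup>2) (at z)"
      by simp
    have "(tanh z)\<^sup>2 < 1"
      using tanh_real_bounds[of z] by (simp add: abs_square_less_1 abs_less_iff)
    then show "\<bar>1 - (tanh z)\<^sup>2\<bar> \<le> 1"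
      by simp
  qed (auto intro!: continuous_intros)
  then show ?thesis
    by (cases "a \<le> b") (force simp: abs_minus_commute)+
qed

lemma ge_at_0_of_deriv_sign:
  fixes f f' :: "real \<Rightarrow> real"
  assumes f': "\<And>x. (f has_real_derivative f' x) (at x)" and sign: "\<And>x. 0 \<le> x * f' x"
  shows "f 0 \<le> f t"
proof -
  have cont: "continuous_on {a..b} f" for a b
    using f' by (intro continuous_at_imp_continuous_on ballI DERIV_isCont)
  show ?thesis
  proof (cases "0 \<le> t")
    case True
    have "0 * (t - 0) \<le> f t - f 0"
      by (rule diff_ge_of_deriv_ge[where c=0, OF True cont f']) (use sign in \<open>force simp: zero_le_mult_iff\<close>)
    then show ?thesis
      by simp
  next
    case False
    have "0 * (0 - t) \<le> (\<lambda>x. - f x) 0 - (\<lambda>x. - f x) t"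
    proof (rule diff_ge_of_deriv_ge[where c=0 and f'="\<lambda>x. - f' x"])
      show "continuous_on {t..0} (\<lambda>x. - f x)"
        using cont by (intro continuous_intros)
      fix x :: real assume "t < x" "x < 0"
      show "((\<lambda>x. - f x) has_real_derivative - f' x) (at x)"
        using f' by (rule DERIV_minus)
      show "0 \<le> - f' x"
        using sign[of x] \<open>x < 0\<close> by (simp add: zero_le_mult_iff)
    qed (use False in simp)
    then show ?thesis
      by simp
  qed
qed

lemma tanh_system_ge_initial:
  fixes \<rho> w R :: "real \<Rightarrow> real"
  assumes "w 0 = 0" and \<rho>': "\<And>t. (\<rho> has_real_derivative tanh (w t)) (at t)"
    and w': "\<And>t. (w has_real_derivative R t) (at t)" and "\<And>t. 0 \<le> R t"
  shows "\<rho> 0 \<le> \<rho> t"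
proof (rule ge_at_0_of_deriv_sign[OF \<rho>'])
  fix x :: real
  have "0 \<le> x * w x"
  proof (cases "0 \<le> x")
    case True
    then show ?thesis
      using deriv_nonneg_imp_mono[OF w', of 0 x] assms by simp
  next
    case False
    then show ?thesis
      using deriv_nonneg_imp_mono[OF w', of x 0] assms by (simp add: zero_le_mult_iff)
  qed
  then show "0 \<le> x * tanh (w x)"
    by (simp add: zero_le_mult_iff)
qed

context warp_params
begin

lemma is_rho_iff_geodesic:
  assumes "0 < s"
  shows "is_rho \<phi> s r \<epsilon> \<rho> \<longleftrightarrow> (\<exists>v. geodesic \<phi> r \<epsilon> s \<rho> v)"
  using assms warp_params_axioms by (auto simp: is_rho_def geodesic_def geodesic_axioms_def)

lemma geodesic_unique:
  assumes "geodesic \<phi> r \<epsilon> s \<rho>1 v1" "geodesic \<phi> r \<epsilon> s \<rho>2 v2"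
  shows "\<rho>1 = \<rho>2"
proof
  fix t
  interpret g1: geodesic \<phi> r \<epsilon> s \<rho>1 v1 by fact
  interpret g2: geodesic \<phi> r \<epsilon> s \<rho>2 v2 by fact
  let ?G = "1 + 4 / A s"
  show "\<rho>1 t = \<rho>2 t"
  proof (rule second_order_ode_unique[OF _ _ g1.rho_deriv g2.rho_deriv _ _ g1.v_deriv g2.v_deriv,
        where c=0 and L="1 + ?G\<^sup>2" and M="2 * ?G"])
    fix x
    have "\<bar>warp_ratio (\<rho>1 x) - warp_ratio (\<rho>2 x)\<bar> \<le> (1 + ?G\<^sup>2) * \<bar>\<rho>1 x - \<rho>2 x\<bar>"
      using warp_ratio_lipschitz g1.s_pos g1.rho_ge g2.rho_ge by blast
    moreover have "0 \<le> warp_ratio (\<rho>2 x)" "warp_ratio (\<rho>2 x) \<le> ?G"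
      using warp_ratio_bounds[OF g1.s_pos g2.rho_ge] by auto
    ultimately have "\<bar>warp_ratio (\<rho>1 x) * (1 - (v1 x)\<^sup>2) - warp_ratio (\<rho>2 x) * (1 - (v2 x)\<^sup>2)\<bar>
        \<le> (1 + ?G\<^sup>2) * \<bar>\<rho>1 x - \<rho>2 x\<bar> + 2 * ?G * \<bar>v1 x - v2 x\<bar>"
      using abs_diff_mult_one_minus_sq_le g1.speed_sq_lt_1 g2.speed_sq_lt_1 by blast
    then show "\<bar>A' (\<rho>1 x) / A (\<rho>1 x) * (1 - (v1 x)\<^sup>2) - A' (\<rho>2 x) / A (\<rho>2 x) * (1 - (v2 x)\<^sup>2)\<bar>
        \<le> (1 + ?G\<^sup>2) * \<bar>\<rho>1 x - \<rho>2 x\<bar> + 2 * ?G * \<bar>v1 x - v2 x\<bar>"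
      unfolding warp_ratio_def .
  next
    show "continuous_on UNIV v1" "continuous_on UNIV v2"
      using g1.v_deriv g2.v_deriv by (auto intro!: continuous_at_imp_continuous_on DERIV_isCont)
    show "0 \<le> 2 * ?G"
      using warp_pos[OF g1.s_pos] by simp
  qed (simp_all add: g1.rho_0 g2.rho_0 g1.v_0 g2.v_0)
qed

text \<open>With \<open>\<rho>' = tanh w\<close> the geodesic equation becomes the first-order system
  \<open>\<rho>' = tanh w, w' = (A'/A)(\<rho>)\<close>, which keeps \<open>\<bar>\<rho>'\<bar> < 1\<close> and is globally Lipschitz once \<open>A'/A\<close> is
  frozen below \<open>s\<close>, a region the solution never enters.\<close>

lemma geodesic_exists:
  assumes "0 < s"
  shows "\<exists>\<rho> v. geodesic \<phi> r \<epsilon> s \<rho> v"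
proof -
  let ?Lip = "1 + (1 + 4 / A s)\<^sup>2"
  define R where "R y = warp_ratio (max y s)" for y
  have R_nonneg: "0 \<le> R y" for y
    using warp_ratio_bounds(1)[OF assms] by (simp add: R_def)
  interpret lipschitz_system "\<lambda>t y z. tanh z" "\<lambda>t y z. R y" "1 + ?Lip"
  proof
    fix Y :: "real \<Rightarrow> real" assume "continuous_on UNIV Y"
    then show "continuous_on UNIV (\<lambda>t. R (Y t))"
      unfolding R_def by (intro continuous_on_compose2[OF continuous_warp_ratio[OF assms]] continuous_intros) auto
  next
    fix t y z y' z' :: real
    have "\<bar>tanh z - tanh z'\<bar> \<le> \<bar>z - z'\<bar>"
      by (rule tanh_lipschitz)
    also have "\<dots> \<le> (1 + ?Lip) * (\<bar>y - y'\<bar> + \<bar>z - z'\<bar>)"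
      by (simp add: algebra_simps add_increasing)
    finally show "\<bar>tanh z - tanh z'\<bar> \<le> (1 + ?Lip) * (\<bar>y - y'\<bar> + \<bar>z - z'\<bar>)" .
    have "\<bar>R y - R y'\<bar> \<le> ?Lip * \<bar>max y s - max y' s\<bar>"
      unfolding R_def by (rule warp_ratio_lipschitz[OF assms]) auto
    also have "\<dots> \<le> (1 + ?Lip) * (\<bar>y - y'\<bar> + \<bar>z - z'\<bar>)"
      by (intro mult_mono) (auto simp: max_def)
    finally show "\<bar>R y - R y'\<bar> \<le> (1 + ?Lip) * (\<bar>y - y'\<bar> + \<bar>z - z'\<bar>)" .
  qed (auto intro!: continuous_intros add_pos_nonneg)
  obtain \<rho> w where sol: "\<rho> 0 = s" "w 0 = 0"
    "\<And>t. (\<rho> has_real_derivative tanh (w t)) (at t)" "\<And>t. (w has_real_derivative R (\<rho> t)) (at t)"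
    using solution_exists[of s 0] by blast
  have rho_ge: "s \<le> \<rho> t" for t
    using tanh_system_ge_initial[OF sol(2,3,4) R_nonneg] sol(1) by simp
  have "((\<lambda>t. tanh (w t)) has_real_derivative A' (\<rho> t) / A (\<rho> t) * (1 - (tanh (w t))\<^sup>2)) (at t)" for t
  proof -
    have "((\<lambda>t. tanh (w t)) has_real_derivative (1 - (tanh (w t))\<^sup>2) * R (\<rho> t)) (at t)"
      by (rule has_field_derivative_tanh[OF _ sol(4)]) simp
    moreover have "R (\<rho> t) = A' (\<rho> t) / A (\<rho> t)"
      using rho_ge[of t] by (simp add: R_def warp_ratio_def max_def)
    ultimately show ?thesis
      by (simp add: mult.commute)
  qed
  then have "geodesic \<phi> r \<epsilon> s \<rho> (\<lambda>t. tanh (w t))"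
    unfolding geodesic_def geodesic_axioms_def using warp_params_axioms assms sol by simp
  then show ?thesis
    by blast
qed

lemma geodesic_rho:
  assumes "0 < s"
  shows "geodesic \<phi> r \<epsilon> s (rho \<phi> s r \<epsilon>) (deriv (rho \<phi> s r \<epsilon>))"
proof -
  obtain \<rho>0 where "is_rho \<phi> s r \<epsilon> \<rho>0"
    using geodesic_exists[OF assms] is_rho_iff_geodesic[OF assms] by blast
  moreover have "\<rho> = \<rho>0" if "is_rho \<phi> s r \<epsilon> \<rho>" for \<rho>
    using that calculation geodesic_unique unfolding is_rho_iff_geodesic[OF assms] by blast
  ultimately have "is_rho \<phi> s r \<epsilon> (rho \<phi> s r \<epsilon>)"
    unfolding rho_def using assms by (simp add: theI)
  then obtain v where g: "geodesic \<phi> r \<epsilon> s (rho \<phi> s r \<epsilon>) v"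
    using is_rho_iff_geodesic[OF assms] by blast
  moreover have "deriv (rho \<phi> s r \<epsilon>) = v"
    using geodesic.rho_deriv[OF g] by (intro ext DERIV_imp_deriv)
  ultimately show ?thesis
    by simp
qed

section \<open>Negative curvature at large times\<close>

lemma curvatures_negative:
  assumes "40 \<le> t" "0 \<le> s"
  shows "K (rho \<phi> s r \<epsilon> t) < 0 \<and> Kmu \<phi> s r \<epsilon> t < 0"
proof (cases "s = 0")
  case True
  have "r + \<epsilon> < t"
    using r_small eps_small pi_less_4 assms(1) by linarith
  moreover have "deriv (\<lambda>t. t) t = 1"
    by (rule DERIV_imp_deriv[OF DERIV_ident])
  ultimately show ?thesis
    using True Kpar_eq_minus_1 by (simp add: rho_def Kmu_def)
next
  case False
  then interpret geodesic \<phi> r \<epsilon> s "rho \<phi> s r \<epsilon>" "deriv (rho \<phi> s r \<epsilon>)"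
    using geodesic_rho assms(2) by simp
  let ?x = "rho \<phi> s r \<epsilon> t" and ?v = "deriv (rho \<phi> s r \<epsilon>) t"
  have A_x: "5 \<le> A ?x"
    using warp_rho_ge[of t] assms(1) by simp
  then have far: "r + \<epsilon> < ?x"
    using warp_initial_bounds(2)[of ?x] rho_pos[of t] by force
  have "25 \<le> (A ?x)\<^sup>2"
    using power_mono[OF A_x, of 2] by simp
  then have "1 - (A' ?x)\<^sup>2 < 0"
    using warp_far_bounds(1)[of ?x] far by simp
  then have "Kperp \<phi> r \<epsilon> ?x < 0"
    using A_x by (simp add: Kperp_def divide_neg_pos)
  then have "(1 - ?v\<^sup>2) * Kperp \<phi> r \<epsilon> ?x < 0"
    using speed_sq_lt_1[of t] by (simp add: mult_pos_neg)
  moreover have "?v\<^sup>2 * K ?x \<le> 0"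
    using Kpar_eq_minus_1[OF far] by simp
  ultimately show ?thesis
    using Kpar_eq_minus_1[OF far] unfolding Kmu_def Let_def by linarith
qed

end

lemma warp_params_near_quarter_pi:
  assumes "cutoff \<phi>" "r \<in> {pi/4 - \<eta> .. pi/4 + \<eta>}" "\<eta> < 1/5" "0 \<le> \<epsilon>" "\<epsilon> < 1/8"
  shows "warp_params \<phi> r \<epsilon>"
  using assms pi_gt3 by unfold_locales auto

theorem lemma3p15:
  fixes \<phi> :: "real \<Rightarrow> real"
  assumes "cutoff \<phi>"
  shows "\<exists>\<eta>0>0. \<forall>\<eta>. 0 < \<eta> \<and> \<eta> < \<eta>0 \<longrightarrow>
           (\<exists>\<epsilon>1>0. \<forall>\<epsilon>0. 0 < \<epsilon>0 \<and> \<epsilon>0 < \<epsilon>1 \<longrightarrow>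
              (\<exists>T>0. \<forall>t s r \<epsilon>. T \<le> t \<and> 0 \<le> s \<and> r \<in> {pi/4 - \<eta> .. pi/4 + \<eta>}
                   \<and> 0 \<le> \<epsilon> \<and> \<epsilon> \<le> \<epsilon>0 \<longrightarrow>
                   Kpar \<phi> r \<epsilon> (rho \<phi> s r \<epsilon> t) < 0 \<and> Kmu \<phi> s r \<epsilon> t < 0))"
proof -
  have negative: "Kpar \<phi> r \<epsilon> (rho \<phi> s r \<epsilon> t) < 0 \<and> Kmu \<phi> s r \<epsilon> t < 0"
    if "r \<in> {pi/4 - \<eta> .. pi/4 + \<eta>}" "\<eta> < 1/5" "0 \<le> \<epsilon>" "\<epsilon> < 1/8" "40 \<le> t" "0 \<le> s" for \<eta> r \<epsilon> s t
    using warp_params.curvatures_negative[OF warp_params_near_quarter_pi[OF assms that(1-4)] that(5,6)] .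
  show ?thesis
    by (rule exI[of _ "1/5"], intro conjI allI impI, simp, rule exI[of _ "1/8"], intro conjI allI impI, simp,
        rule exI[of _ 40], intro conjI allI impI, simp) (use negative in force)+
qed

end
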